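(* Let $T$ be a balanced tree of height 3. Suppose that (1) for all $u\in V_2$, $|N(u)\cap V_1|=1$, and (2) for all $s\in V_1$, $|N(s)\cap V_2|\le 1$. Then $T$ is unmixed.
   Context: $N(v)=\{u:uv\in E\}$, $N(D)=\bigcup_{v\in D}N(v)$. A leaf is a vertex of degree 1; the height of a vertex is its minimum distance to a leaf; $V_k$ is the set of vertices of height $k$; the height of $T$ is the maximum height of a vertex; $T$ is balanced if no two adjacent vertices have the same height. A TD-set is $D$ with $N(D)=V$, minimal if no proper subset is a TD-set; $T$ is unmixed if all minimal TD-sets have the same size. *)

theory Defs
  imports Main
begin

definition simple_graph :: "'a set \<Rightarrow> ('a \<times> 'a) set \<Rightarrow> bool" where
  "simple_graph V E \<longleftrightarrow> finite V \<and> E \<subseteq> V \<times> V \<and> sym E \<and> irrefl E"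

definition connected_graph :: "'a set \<Rightarrow> ('a \<times> 'a) set \<Rightarrow> bool" where
  "connected_graph V E \<longleftrightarrow> (\<forall>u\<in>V. \<forall>v\<in>V. (u, v) \<in> E\<^sup>*)"

definition is_cycle :: "('a \<times> 'a) set \<Rightarrow> 'a list \<Rightarrow> bool" where
  "is_cycle E cs \<longleftrightarrow> length cs \<ge> 3 \<and> distinct cs
     \<and> (\<forall>i. Suc i < length cs \<longrightarrow> (cs ! i, cs ! Suc i) \<in> E)
     \<and> (last cs, hd cs) \<in> E"

definition is_tree :: "'a set \<Rightarrow> ('a \<times> 'a) set \<Rightarrow> bool" where
  "is_tree V E \<longleftrightarrow> simple_graph V E \<and> V \<noteq> {} \<and> connected_graph V E
     \<and> (\<nexists>cs. is_cycle E cs)"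

definition nbhd :: "('a \<times> 'a) set \<Rightarrow> 'a \<Rightarrow> 'a set" where
  "nbhd E v = {u. (u, v) \<in> E}"

definition nbhd_set :: "('a \<times> 'a) set \<Rightarrow> 'a set \<Rightarrow> 'a set" where
  "nbhd_set E D = (\<Union>v\<in>D. nbhd E v)"

definition is_leaf :: "('a \<times> 'a) set \<Rightarrow> 'a \<Rightarrow> bool" where
  "is_leaf E v \<longleftrightarrow> card (nbhd E v) = 1"

definition vheight :: "('a \<times> 'a) set \<Rightarrow> 'a \<Rightarrow> nat" where
  "vheight E v = (LEAST n. \<exists>l. is_leaf E l \<and> (v, l) \<in> E ^^ n)"

definition level :: "'a set \<Rightarrow> ('a \<times> 'a) set \<Rightarrow> nat \<Rightarrow> 'a set" where
  "level V E k = {v \<in> V. vheight E v = k}"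

definition tree_height :: "'a set \<Rightarrow> ('a \<times> 'a) set \<Rightarrow> nat" where
  "tree_height V E = Max (vheight E ` V)"

definition balanced :: "'a set \<Rightarrow> ('a \<times> 'a) set \<Rightarrow> bool" where
  "balanced V E \<longleftrightarrow> (\<forall>(u, v)\<in>E. vheight E u \<noteq> vheight E v)"

definition is_TD_set :: "'a set \<Rightarrow> ('a \<times> 'a) set \<Rightarrow> 'a set \<Rightarrow> bool" where
  "is_TD_set V E D \<longleftrightarrow> D \<subseteq> V \<and> nbhd_set E D = V"

definition minimal_TD_set :: "'a set \<Rightarrow> ('a \<times> 'a) set \<Rightarrow> 'a set \<Rightarrow> bool" where
  "minimal_TD_set V E D \<longleftrightarrow> is_TD_set V E D \<and> (\<forall>D'. D' \<subset> D \<longrightarrow> \<not> is_TD_set V E D')"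

definition unmixed :: "'a set \<Rightarrow> ('a \<times> 'a) set \<Rightarrow> bool" where
  "unmixed V E \<longleftrightarrow> (\<forall>D1 D2. minimal_TD_set V E D1 \<and> minimal_TD_set V E D2 \<longrightarrow> card D1 = card D2)"

end

theory Submission
  imports Defs
begin

text \<open>Every minimal TD-set D has exactly 2 |V_1| elements. Each vertex of V_1 supports a leaf,
  so V_1 \<subseteq> D. A vertex of height 3 cannot lie in D: all its neighbours have height 2 and are
  already dominated by their V_1-neighbour, so it would have no private neighbour. Hence the
  remaining vertices of D have height 0 or 2 and thus a unique neighbour in V_1; sending each
  of them to that neighbour is a bijection onto V_1: surjective because V_1 must be dominated,
  injective by condition (2) for two vertices of height 2 and by privacy when a leaf is involved.\<close>

lemma TD_set_dominates:
  assumes "is_TD_set V E D" "y \<in> V"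
  obtains z where "z \<in> D" "(y, z) \<in> E"
  using assms by (auto simp: is_TD_set_def nbhd_set_def nbhd_def)

lemma minimal_TD_set_private_neighbour:
  assumes min: "minimal_TD_set V E D" and "x \<in> D"
  obtains y where "(y, x) \<in> E" "\<forall>z\<in>D. (y, z) \<in> E \<longrightarrow> z = x"
proof (rule ccontr)
  assume redundant: "\<not> thesis"
  have TD: "is_TD_set V E D" using min by (simp add: minimal_TD_set_def)
  have "V \<subseteq> nbhd_set E (D - {x})"
  proof
    fix y assume "y \<in> V"
    with TD obtain z where "z \<in> D" "(y, z) \<in> E" by (rule TD_set_dominates)
    then show "y \<in> nbhd_set E (D - {x})"
      using redundant that by (cases "z = x") (auto simp: nbhd_set_def nbhd_def)
  qed
  moreover have "nbhd_set E (D - {x}) \<subseteq> nbhd_set E D" by (auto simp: nbhd_set_def)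
  ultimately have "is_TD_set V E (D - {x})" using TD by (auto simp: is_TD_set_def)
  moreover have "D - {x} \<subset> D" using \<open>x \<in> D\<close> by auto
  ultimately show False using min by (auto simp: minimal_TD_set_def)
qed

lemma unmixed_edgeless:
  assumes "V \<noteq> {}"
  shows "unmixed V {}"
  using assms by (auto simp: unmixed_def minimal_TD_set_def is_TD_set_def nbhd_set_def nbhd_def)

lemma leaf_unique_neighbour:
  assumes "is_leaf E l" "(u, l) \<in> E" "(v, l) \<in> E"
  shows "u = v"
proof -
  obtain w where "nbhd E l = {w}" using assms(1) by (auto simp: is_leaf_def card_1_singleton_iff)
  then show ?thesis using assms(2,3) unfolding nbhd_def by (metis mem_Collect_eq singletonD)
qed

lemma leaf_support_in_TD_set:
  assumes "is_TD_set V E D" "sym E" "E \<subseteq> V \<times> V" "is_leaf E l" "(s, l) \<in> E"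
  shows "s \<in> D"
proof -
  have "l \<in> V" using assms(3,5) by auto
  with assms(1) obtain z where "z \<in> D" "(l, z) \<in> E" by (rule TD_set_dominates)
  then have "z = s" using assms(2,4,5) by (meson leaf_unique_neighbour symD)
  with \<open>z \<in> D\<close> show ?thesis by simp
qed

lemma minimal_TD_set_leaf_only_nbr_of_support:
  assumes min: "minimal_TD_set V E D" and "a \<in> D" "is_leaf E a" "(s, a) \<in> E"
    and "b \<in> D" "(s, b) \<in> E"
  shows "b = a"
proof -
  obtain y where "(y, a) \<in> E" and y_private: "\<forall>z\<in>D. (y, z) \<in> E \<longrightarrow> z = a"
    using min \<open>a \<in> D\<close> by (rule minimal_TD_set_private_neighbour)
  have "y = s" using assms(3) \<open>(y, a) \<in> E\<close> assms(4) by (rule leaf_unique_neighbour)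
  with y_private assms(5,6) show ?thesis by blast
qed

lemma vheight_le:
  assumes "is_leaf E l" "(v, l) \<in> E ^^ n"
  shows "vheight E v \<le> n"
  unfolding vheight_def using assms by (intro Least_le) blast

lemma vheight_le_tree_height: "finite V \<Longrightarrow> v \<in> V \<Longrightarrow> vheight E v \<le> tree_height V E"
  unfolding tree_height_def by simp

text \<open>Without leaves every vertex has the same unspecified height LEAST n. False.\<close>

lemma balanced_without_leaf_edgeless:
  assumes "balanced V E" "\<nexists>l. is_leaf E l"
  shows "E = {}"
proof (rule ccontr)
  assume "E \<noteq> {}"
  then obtain u v where "(u, v) \<in> E" by auto
  moreover have "vheight E u = vheight E v" using assms(2) by (simp add: vheight_def)
  ultimately show False using assms(1) by (auto simp: balanced_def)
qed

locale graph_with_leaf =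
  fixes V :: "'a set" and E :: "('a \<times> 'a) set"
  assumes simple: "simple_graph V E"
    and connected: "connected_graph V E"
    and has_leaf: "\<exists>l. is_leaf E l"
begin

lemma finite_V: "finite V"
  and edges_in_V: "E \<subseteq> V \<times> V"
  and sym_E: "sym E"
  using simple by (auto simp: simple_graph_def)

lemma edge_sym: "(u, v) \<in> E \<Longrightarrow> (v, u) \<in> E"
  using sym_E by (rule symD)

lemma vheight_attained:
  assumes "v \<in> V"
  obtains l where "is_leaf E l" "(v, l) \<in> E ^^ vheight E v"
proof -
  obtain l0 u where "is_leaf E l0" "u \<in> nbhd E l0"
    using has_leaf by (fastforce simp: is_leaf_def card_1_singleton_iff)
  then have "l0 \<in> V" using edges_in_V by (auto simp: nbhd_def)
  then have "(v, l0) \<in> E\<^sup>*" using connected assms by (auto simp: connected_graph_def)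
  then obtain n where "(v, l0) \<in> E ^^ n" using rtrancl_power by blast
  with \<open>is_leaf E l0\<close> have "\<exists>n l. is_leaf E l \<and> (v, l) \<in> E ^^ n" by blast
  then have "\<exists>l. is_leaf E l \<and> (v, l) \<in> E ^^ vheight E v"
    unfolding vheight_def by (rule LeastI_ex)
  then show ?thesis using that by blast
qed

lemma vheight_edge_le:
  assumes "(u, v) \<in> E"
  shows "vheight E u \<le> Suc (vheight E v)"
proof -
  have "v \<in> V" using assms edges_in_V by auto
  then obtain l where "is_leaf E l" "(v, l) \<in> E ^^ vheight E v" by (rule vheight_attained)
  moreover from this(2) have "(u, l) \<in> E ^^ Suc (vheight E v)"
    using assms by (meson relpow_Suc_I2)
  ultimately show ?thesis by (blast intro: vheight_le)
qed

lemma vheight_0_leaf: "v \<in> V \<Longrightarrow> vheight E v = 0 \<Longrightarrow> is_leaf E v"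
  by (rule vheight_attained) auto

lemma vheight_1_support:
  assumes "v \<in> V" "vheight E v = 1"
  obtains l where "is_leaf E l" "(v, l) \<in> E"
  using assms by (auto elim: vheight_attained)

lemma level1_subset_TD_set:
  assumes "is_TD_set V E D"
  shows "level V E 1 \<subseteq> D"
proof
  fix s assume "s \<in> level V E 1"
  then obtain l where "is_leaf E l" "(s, l) \<in> E"
    by (auto simp: level_def elim: vheight_1_support)
  with assms sym_E edges_in_V show "s \<in> D" by (blast intro: leaf_support_in_TD_set)
qed

end

locale balanced_graph_with_leaf = graph_with_leaf +
  assumes balanced: "balanced V E"
begin

lemma vheight_edge:
  assumes "(u, v) \<in> E"
  shows "vheight E u = Suc (vheight E v) \<or> vheight E v = Suc (vheight E u)"
  using balanced assms vheight_edge_le[OF assms] vheight_edge_le[OF edge_sym[OF assms]]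
  unfolding balanced_def by fastforce

end

locale balanced_height3 = balanced_graph_with_leaf +
  assumes vheight_le_3: "v \<in> V \<Longrightarrow> vheight E v \<le> 3"
    and level2_one_level1_nbr: "\<forall>u\<in>level V E 2. card (nbhd E u \<inter> level V E 1) = 1"
    and level1_le1_level2_nbr: "\<forall>s\<in>level V E 1. card (nbhd E s \<inter> level V E 2) \<le> 1"
begin

lemma vheight_3_notin_minimal_TD_set:
  assumes min: "minimal_TD_set V E D" and "w \<in> D"
  shows "vheight E w \<noteq> 3"
proof
  assume "vheight E w = 3"
  obtain y where "(y, w) \<in> E" and y_private: "\<forall>z\<in>D. (y, z) \<in> E \<longrightarrow> z = w"
    using min \<open>w \<in> D\<close> by (rule minimal_TD_set_private_neighbour)
  have "y \<in> V" using \<open>(y, w) \<in> E\<close> edges_in_V by auto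
  moreover have "vheight E y = 2"
    using vheight_edge[OF \<open>(y, w) \<in> E\<close>] vheight_le_3[OF \<open>y \<in> V\<close>] \<open>vheight E w = 3\<close>
    by linarith
  ultimately have "y \<in> level V E 2" by (simp add: level_def)
  then obtain z where "nbhd E y \<inter> level V E 1 = {z}"
    using level2_one_level1_nbr by (auto simp: card_1_singleton_iff)
  then have "z \<in> level V E 1" "(y, z) \<in> E" by (auto simp: nbhd_def intro: edge_sym)
  moreover have "is_TD_set V E D" using min by (simp add: minimal_TD_set_def)
  then have "level V E 1 \<subseteq> D" by (rule level1_subset_TD_set)
  ultimately have "z = w" using y_private by blast
  with \<open>z \<in> level V E 1\<close> \<open>vheight E w = 3\<close> show False by (simp add: level_def)
qed

definition level1_nbr :: "'a \<Rightarrow> 'a" where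
  "level1_nbr x = the_elem (nbhd E x \<inter> level V E 1)"

lemma level1_nbr:
  assumes "x \<in> V" "vheight E x = 0 \<or> vheight E x = 2"
  shows "nbhd E x \<inter> level V E 1 = {level1_nbr x}"
proof -
  obtain s where s: "nbhd E x \<inter> level V E 1 = {s}"
  proof (cases "vheight E x = 0")
    case True
    with assms(1) have "is_leaf E x" by (rule vheight_0_leaf)
    then obtain s where s: "nbhd E x = {s}" by (auto simp: is_leaf_def card_1_singleton_iff)
    then have "(s, x) \<in> E" unfolding nbhd_def by blast
    then have "s \<in> V" "vheight E s = 1"
      using edges_in_V vheight_edge[OF \<open>(s, x) \<in> E\<close>] True by auto
    then have "s \<in> level V E 1" by (simp add: level_def)
    with s that show thesis by blast
  next
    case False
    with assms have "x \<in> level V E 2" by (simp add: level_def)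
    with level2_one_level1_nbr that show thesis by (auto simp: card_1_singleton_iff)
  qed
  then show ?thesis by (simp add: level1_nbr_def)
qed

lemma bij_betw_level1_nbr:
  assumes min: "minimal_TD_set V E D"
  shows "bij_betw level1_nbr (D - level V E 1) (level V E 1)"
proof -
  let ?L1 = "level V E 1" and ?A = "D - level V E 1"
  have TD: "is_TD_set V E D" using min by (simp add: minimal_TD_set_def)
  have A_V: "x \<in> V" if "x \<in> ?A" for x
    using that TD by (auto simp: is_TD_set_def)
  have A_height: "vheight E x = 0 \<or> vheight E x = 2" if "x \<in> ?A" for x
  proof -
    have "vheight E x \<noteq> 1" using that A_V[OF that] by (simp add: level_def)
    moreover have "vheight E x \<noteq> 3" using that vheight_3_notin_minimal_TD_set[OF min] by blast
    ultimately show ?thesis using vheight_le_3[OF A_V[OF that]] by linarith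
  qed
  have A_nbr: "level1_nbr x \<in> ?L1" "(level1_nbr x, x) \<in> E" if "x \<in> ?A" for x
    using level1_nbr[OF A_V[OF that] A_height[OF that]] by (auto simp: nbhd_def)
  have "inj_on level1_nbr ?A"
  proof (rule inj_onI)
    fix x y assume x: "x \<in> ?A" and y: "y \<in> ?A" and same: "level1_nbr x = level1_nbr y"
    let ?s = "level1_nbr x"
    have edges: "(?s, x) \<in> E" "(?s, y) \<in> E" using A_nbr(2)[OF x] A_nbr(2)[OF y] same by auto
    consider "vheight E x = 0" | "vheight E y = 0" | "vheight E x = 2" "vheight E y = 2"
      using A_height[OF x] A_height[OF y] by auto
    then show "x = y"
    proof cases
      case 1
      then have "is_leaf E x" using A_V[OF x] by (intro vheight_0_leaf)
      then show ?thesis using minimal_TD_set_leaf_only_nbr_of_support[OF min] x y edges by blast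
    next
      case 2
      then have "is_leaf E y" using A_V[OF y] by (intro vheight_0_leaf)
      then show ?thesis using minimal_TD_set_leaf_only_nbr_of_support[OF min] x y edges by blast
    next
      case 3
      then have "x \<in> nbhd E ?s \<inter> level V E 2" "y \<in> nbhd E ?s \<inter> level V E 2"
        using A_V x y edges by (auto simp: nbhd_def level_def intro: edge_sym)
      moreover have "card (nbhd E ?s \<inter> level V E 2) \<le> 1"
        using level1_le1_level2_nbr A_nbr(1)[OF x] by blast
      moreover have "finite (nbhd E ?s \<inter> level V E 2)" using finite_V by (simp add: level_def)
      ultimately show ?thesis by (auto simp: card_le_Suc0_iff_eq)
    qed
  qed
  moreover have "?L1 \<subseteq> level1_nbr ` ?A"
  proof
    fix s assume s: "s \<in> ?L1"
    then have "s \<in> V" "vheight E s = 1" by (auto simp: level_def)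
    with TD obtain z where "z \<in> D" "(s, z) \<in> E" by (auto elim: TD_set_dominates)
    have "vheight E z = 0 \<or> vheight E z = 2"
      using vheight_edge[OF \<open>(s, z) \<in> E\<close>] \<open>vheight E s = 1\<close> by linarith
    then have z: "z \<in> ?A" using \<open>z \<in> D\<close> by (auto simp: level_def)
    have "s \<in> nbhd E z \<inter> ?L1" using s \<open>(s, z) \<in> E\<close> by (simp add: nbhd_def)
    then have "s = level1_nbr z" using level1_nbr[OF A_V[OF z] A_height[OF z]] by blast
    with z show "s \<in> level1_nbr ` ?A" by blast
  qed
  ultimately show ?thesis using A_nbr(1) by (auto simp: bij_betw_def)
qed

lemma card_minimal_TD_set:
  assumes min: "minimal_TD_set V E D"
  shows "card D = 2 * card (level V E 1)"
proof -
  have TD: "is_TD_set V E D" using min by (simp add: minimal_TD_set_def)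
  then have "finite D" using finite_V by (auto simp: is_TD_set_def intro: finite_subset)
  moreover have "level V E 1 \<subseteq> D" using TD by (rule level1_subset_TD_set)
  ultimately have "card D = card (level V E 1) + card (D - level V E 1)"
    using card_Diff_subset[OF finite_subset] card_mono by (metis le_add_diff_inverse)
  also have "card (D - level V E 1) = card (level V E 1)"
    using bij_betw_level1_nbr[OF min] by (rule bij_betw_same_card)
  finally show ?thesis by simp
qed

end

theorem theorem3p36:
  fixes V :: "'a set" and E :: "('a \<times> 'a) set"
  assumes "is_tree V E"
    and "balanced V E"
    and "tree_height V E = 3"
    and "\<forall>u\<in>level V E 2. card (nbhd E u \<inter> level V E 1) = 1"
    and "\<forall>s\<in>level V E 1. card (nbhd E s \<inter> level V E 2) \<le> 1"
  shows "unmixed V E"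
proof (cases "\<exists>l. is_leaf E l")
  case True
  have "simple_graph V E" "connected_graph V E" using assms(1) by (simp_all add: is_tree_def)
  moreover have "vheight E v \<le> 3" if "v \<in> V" for v
    using \<open>simple_graph V E\<close> that assms(3) vheight_le_tree_height[of V v E]
    by (simp add: simple_graph_def)
  ultimately interpret balanced_height3 V E
    using True assms(2,4,5) by unfold_locales
  show ?thesis using card_minimal_TD_set by (simp add: unmixed_def)
next
  case False
  with assms(2) have "E = {}" by (rule balanced_without_leaf_edgeless)
  moreover have "V \<noteq> {}" using assms(1) by (simp add: is_tree_def)
  ultimately show ?thesis by (simp add: unmixed_edgeless)
qed

end
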